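(* Let $N\ge 3$ and let $G$ be the graph on vertices $\{u_{1j},b_{1j},u_{2j}: j\in[N]\}$ whose fractional stable set polytope $QSTAB(G)\subseteq\mathbb R^{3N}$ is given by: $u_{1j},b_{1j},u_{2j}\ge0$ for $j\in[N]$; $b_{1j}+\sum_{k=1}^N u_{1k}\le1$ for $j\in[N]$; $\sum_{j=1}^N u_{2j}\le1$; $u_{1j}+u_{2j}+b_{1j}\le1$ for $j\in[N]$. Let $O=[N]$. For every $U\subseteq O$ with $2\le|U|\le N-1$, every $m\in O\setminus U$ and every $V$ with $U\subseteq V\subseteq O$, the vector $\mathbf v(m,U,V)$ with $u_{1m}=|U|^{-1}$, $b_{1j}=1-|U|^{-1}$ for $j\in V$, $u_{2j}=|U|^{-1}$ for $j\in U$, and all other coordinates $0$, is an extreme point of $QSTAB(G)$.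
   Context: $G$ is the enhanced conflict graph of a $2\times N$ switch whose traffic consists of unicasts from input 1 to each output $j$ ($u_{1j}$), a broadcast from input 1 to all outputs (subflows $b_{1j}$), and unicasts from input 2 to each output $j$ ($u_{2j}$); its edges are: $u_{1j}\sim u_{1k}$ and $u_{2j}\sim u_{2k}$ for $j\ne k$; $b_{1j}\sim u_{1k}$ for all $j,k$; and $u_{1j}\sim u_{2j}$, $u_{2j}\sim b_{1j}$ for all $j$. $QSTAB(G)$ is the set of nonnegative vectors satisfying all clique inequalities, which for this graph are the inequalities listed. *)

theory Defs
  imports Main "HOL-Library.Function_Algebras" Complex_Main
begin

text \<open>Coordinates of R^{3N}: kinds u1, b1, u2, each indexed by j in {1..N}.
A point is a function kind => nat => real that vanishes outside j in {1..N}.\<close>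

datatype kind = U1 | B1 | U2

definition QSTAB :: "nat \<Rightarrow> (kind \<Rightarrow> nat \<Rightarrow> real) set" where
  "QSTAB N = {x.
     (\<forall>k j. j \<notin> {1..N} \<longrightarrow> x k j = 0) \<and>
     (\<forall>j\<in>{1..N}. x U1 j \<ge> 0 \<and> x B1 j \<ge> 0 \<and> x U2 j \<ge> 0) \<and>
     (\<forall>j\<in>{1..N}. x B1 j + (\<Sum>k=1..N. x U1 k) \<le> 1) \<and>
     (\<Sum>j=1..N. x U2 j) \<le> 1 \<and>
     (\<forall>j\<in>{1..N}. x U1 j + x U2 j + x B1 j \<le> 1)}"

definition is_extreme_point :: "(kind \<Rightarrow> nat \<Rightarrow> real) set \<Rightarrow> (kind \<Rightarrow> nat \<Rightarrow> real) \<Rightarrow> bool" where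
  "is_extreme_point P x \<longleftrightarrow> x \<in> P \<and>
     (\<forall>y\<in>P. \<forall>z\<in>P. \<forall>t::real. 0 < t \<and> t < 1 \<and>
        x = (\<lambda>k j. t * y k j + (1 - t) * z k j) \<longrightarrow> y = z)"

definition vvec :: "nat \<Rightarrow> nat set \<Rightarrow> nat set \<Rightarrow> kind \<Rightarrow> nat \<Rightarrow> real" where
  "vvec m U V = (\<lambda>k j. case k of
      U1 \<Rightarrow> (if j = m then 1 / real (card U) else 0)
    | B1 \<Rightarrow> (if j \<in> V then 1 - 1 / real (card U) else 0)
    | U2 \<Rightarrow> (if j \<in> U then 1 / real (card U) else 0))"

end

theory Submission
  imports Defs
begin

text \<open>Every inequality of QSTAB that is tight at v = vvec m U V is tight at any two points
of QSTAB having v as a proper convex combination; in particular those points vanish wherever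
v does. On the support of v the tight constraints (the broadcast constraint for j \<in> V, the
clique constraint for j \<in> U and the input-2 constraint) have v as their unique solution, so
both points coincide with v.\<close>

lemma convex_comb_eq_upper_bound:
  fixes p q c t :: real
  assumes "p \<le> c" "q \<le> c" "0 < t" "t < 1" "t * p + (1 - t) * q = c"
  shows "p = c"
proof -
  have "t * p \<le> t * c" "(1 - t) * q \<le> (1 - t) * c"
    using assms by (simp_all add: mult_left_mono)
  moreover have "t * c + (1 - t) * c = c" by (simp add: algebra_simps)
  ultimately have "t * p = t * c" using assms(5) by linarith
  then show ?thesis using assms(3) by simp
qed

lemma convex_comb_eq_lower_bound:
  fixes p q c t :: real
  assumes "c \<le> p" "c \<le> q" "0 < t" "t < 1" "t * p + (1 - t) * q = c"
  shows "p = c"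
  using convex_comb_eq_upper_bound[of "- p" "- c" "- q" t] assms by (simp add: algebra_simps)

lemma is_extreme_pointI:
  assumes "x \<in> P"
    and "\<And>y z t. y \<in> P \<Longrightarrow> z \<in> P \<Longrightarrow> 0 < t \<Longrightarrow> t < 1 \<Longrightarrow>
           x = (\<lambda>k j. t * y k j + (1 - t) * z k j) \<Longrightarrow> y = x"
  shows "is_extreme_point P x"
  unfolding is_extreme_point_def
proof (intro conjI assms(1) ballI allI impI)
  fix y z and t :: real
  assume y: "y \<in> P" and z: "z \<in> P"
    and comb: "0 < t \<and> t < 1 \<and> x = (\<lambda>k j. t * y k j + (1 - t) * z k j)"
  have "x = (\<lambda>k j. (1 - t) * z k j + (1 - (1 - t)) * y k j)"
    using comb by (auto simp: algebra_simps)
  then have "z = x" using assms(2)[OF z y, of "1 - t"] comb by simp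
  moreover have "y = x" using assms(2)[OF y z] comb by blast
  ultimately show "y = z" by simp
qed

lemma sum_if_mem_const:
  fixes N :: nat and c :: real
  assumes "A \<subseteq> {1..N}"
  shows "(\<Sum>j=1..N. if j \<in> A then c else 0) = real (card A) * c"
  using assms by (simp add: sum.If_cases Int_absorb1)

context
  fixes N :: nat and x y z :: "kind \<Rightarrow> nat \<Rightarrow> real" and t :: real
  assumes y: "y \<in> QSTAB N" and z: "z \<in> QSTAB N" and t: "0 < t" "t < 1"
    and comb: "x = (\<lambda>k j. t * y k j + (1 - t) * z k j)"
begin

private lemma sum_comb: "(\<Sum>j=1..N. x k j) = t * (\<Sum>j=1..N. y k j) + (1 - t) * (\<Sum>j=1..N. z k j)"
  unfolding comb by (simp add: sum.distrib sum_distrib_left)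

lemma QSTAB_comb_zero:
  assumes "x k j = 0"
  shows "y k j = 0"
proof (cases "j \<in> {1..N}")
  case True
  then have "0 \<le> y k j" "0 \<le> z k j"
    using y z unfolding QSTAB_def by (cases k; auto)+
  then show ?thesis
    using convex_comb_eq_lower_bound[of 0 "y k j" "z k j" t] t assms comb by simp
next
  case False
  then show ?thesis using y unfolding QSTAB_def by blast
qed

lemma QSTAB_comb_tight_broadcast:
  assumes "j \<in> {1..N}" "x B1 j + (\<Sum>k=1..N. x U1 k) = 1"
  shows "y B1 j + (\<Sum>k=1..N. y U1 k) = 1"
proof (rule convex_comb_eq_upper_bound[OF _ _ t])
  show "y B1 j + (\<Sum>k=1..N. y U1 k) \<le> 1" "z B1 j + (\<Sum>k=1..N. z U1 k) \<le> 1"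
    using y z assms(1) unfolding QSTAB_def by blast+
  show "t * (y B1 j + (\<Sum>k=1..N. y U1 k)) + (1 - t) * (z B1 j + (\<Sum>k=1..N. z U1 k)) = 1"
    using assms(2) sum_comb[of U1] comb by (simp add: algebra_simps)
qed

lemma QSTAB_comb_tight_clique:
  assumes "j \<in> {1..N}" "x U1 j + x U2 j + x B1 j = 1"
  shows "y U1 j + y U2 j + y B1 j = 1"
proof (rule convex_comb_eq_upper_bound[OF _ _ t])
  show "y U1 j + y U2 j + y B1 j \<le> 1" "z U1 j + z U2 j + z B1 j \<le> 1"
    using y z assms(1) unfolding QSTAB_def by blast+
  show "t * (y U1 j + y U2 j + y B1 j) + (1 - t) * (z U1 j + z U2 j + z B1 j) = 1"
    using assms(2) comb by (simp add: algebra_simps)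
qed

lemma QSTAB_comb_tight_input2:
  assumes "(\<Sum>j=1..N. x U2 j) = 1"
  shows "(\<Sum>j=1..N. y U2 j) = 1"
proof (rule convex_comb_eq_upper_bound[OF _ _ t])
  show "(\<Sum>j=1..N. y U2 j) \<le> 1" "(\<Sum>j=1..N. z U2 j) \<le> 1"
    using y z unfolding QSTAB_def by blast+
  show "t * (\<Sum>j=1..N. y U2 j) + (1 - t) * (\<Sum>j=1..N. z U2 j) = 1"
    using assms sum_comb[of U2] by simp
qed

end

context
  fixes N m :: nat and U V :: "nat set"
  assumes U: "U \<subseteq> {1..N}" and card_U: "2 \<le> card U"
    and m: "m \<in> {1..N} - U" and UV: "U \<subseteq> V" and V: "V \<subseteq> {1..N}"
begin

lemma sum_vvec_U1: "(\<Sum>j=1..N. vvec m U V U1 j) = 1 / real (card U)"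
  using m by (simp add: vvec_def)

lemma sum_vvec_U2: "(\<Sum>j=1..N. vvec m U V U2 j) = 1"
  using sum_if_mem_const[OF U, of "1 / real (card U)"] card_U by (simp add: vvec_def)

lemma vvec_in_QSTAB: "vvec m U V \<in> QSTAB N"
proof -
  have "1 / real (card U) \<le> 1" using card_U by simp
  then show ?thesis
    unfolding QSTAB_def using sum_vvec_U1 sum_vvec_U2 U m UV V
    by (auto simp: vvec_def split: kind.split)
qed

lemma vvec_unique_on_tight_face:
  assumes support: "\<And>k j. vvec m U V k j = 0 \<Longrightarrow> y k j = 0"
    and broadcast: "\<And>j. j \<in> V \<Longrightarrow> y B1 j + (\<Sum>k=1..N. y U1 k) = 1"
    and clique: "\<And>j. j \<in> U \<Longrightarrow> y U1 j + y U2 j + y B1 j = 1"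
    and input2: "(\<Sum>j=1..N. y U2 j) = 1"
  shows "y = vvec m U V"
proof -
  define p where "p = y U1 m"
  have y_U1: "y U1 j = (if j = m then p else 0)" for j
    using support[of U1 j] by (auto simp: p_def vvec_def)
  have "(\<Sum>k=1..N. y U1 k) = p"
    using m by (simp add: y_U1)
  then have y_B1: "y B1 j = (if j \<in> V then 1 - p else 0)" for j
    using broadcast[of j] support[of B1 j] by (auto simp: vvec_def)
  have y_U2: "y U2 j = (if j \<in> U then p else 0)" for j
  proof (cases "j \<in> U")
    case True
    then have "j \<in> V" "j \<noteq> m" using UV m by auto
    then show ?thesis using clique[OF True] True by (simp add: y_U1 y_B1)
  next
    case False
    then show ?thesis using support[of U2 j] by (simp add: vvec_def)
  qed
  have "real (card U) * p = 1"
    using input2 sum_if_mem_const[OF U, of p] by (simp add: y_U2)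
  then have "p = 1 / real (card U)"
    using card_U by (simp add: field_simps)
  then show ?thesis
    by (intro ext) (simp add: vvec_def y_U1 y_B1 y_U2 split: kind.split)
qed

lemma QSTAB_comb_vvec_eq:
  assumes y: "y \<in> QSTAB N" and z: "z \<in> QSTAB N" and t: "0 < t" "t < 1"
    and comb: "vvec m U V = (\<lambda>k j. t * y k j + (1 - t) * z k j)"
  shows "y = vvec m U V"
proof (rule vvec_unique_on_tight_face)
  note tight = QSTAB_comb_zero QSTAB_comb_tight_broadcast QSTAB_comb_tight_clique
    QSTAB_comb_tight_input2
  note tight = tight[OF y z t comb]
  show "vvec m U V k j = 0 \<Longrightarrow> y k j = 0" for k j
    by (rule tight(1))
  show "y B1 j + (\<Sum>k=1..N. y U1 k) = 1" if "j \<in> V" for j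
    using that V sum_vvec_U1 by (intro tight(2)) (auto simp: vvec_def)
  show "y U1 j + y U2 j + y B1 j = 1" if "j \<in> U" for j
    using that U UV m by (intro tight(3)) (auto simp: vvec_def)
  show "(\<Sum>j=1..N. y U2 j) = 1"
    using sum_vvec_U2 by (rule tight(4))
qed

end

theorem theorem10:
  fixes N m :: nat and U V :: "nat set"
  assumes "N \<ge> 3"
    and "U \<subseteq> {1..N}" and "2 \<le> card U" and "card U \<le> N - 1"
    and "m \<in> {1..N} - U"
    and "U \<subseteq> V" and "V \<subseteq> {1..N}"
  shows "is_extreme_point (QSTAB N) (vvec m U V)"
  using vvec_in_QSTAB[OF assms(2,3,5,6,7)] QSTAB_comb_vvec_eq[OF assms(2,3,5,6,7)]
  by (rule is_extreme_pointI)

end
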